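(* For all automata $A$ and $B$: $A\le_F B$ if and only if there exists an automaton $C$ with $A\le_H C$ and $C\le_R B$.
   Context: An automaton $A$ consists of a set $\mathrm{states}(A)$ of states, a nonempty set $\mathrm{start}(A)\subseteq\mathrm{states}(A)$ of start states, a set $\mathrm{acts}(A)$ of actions containing a distinguished internal action $\tau$, and a set $\mathrm{steps}(A)\subseteq\mathrm{states}(A)\times\mathrm{acts}(A)\times\mathrm{states}(A)$ of steps; write $s\xrightarrow{a}_A t$ for $(s,a,t)\in\mathrm{steps}(A)$. For a relation $R$ write $R[s]=\{u\mid (s,u)\in R\}$. A step refinement from $A$ to $B$ is a partial function $r:\mathrm{states}(A)\rightharpoonup\mathrm{states}(B)$ such that (1) if $s\in\mathrm{start}(A)$ then $s\in\mathrm{dom}(r)$ and $r(s)\in\mathrm{start}(B)$; (2) if $s\xrightarrow{a}_A t$ and $s\in\mathrm{dom}(r)$ then $t\in\mathrm{dom}(r)$ and either $r(s)=r(t)$ and $a=\tau$, or $r(s)\xrightarrow{a}_B r(t)$. Write $A\le_R B$ if one exists. A normed forward simulation from $A$ to $B$ is a pair $(f,n)$ where $f\subseteq\mathrm{states}(A)\times\mathrm{states}(B)$ and $n:\mathrm{steps}(A)\times\mathrm{states}(B)\to S$ for some set $S$ with a well-founded strict order $<$, such that: (1) if $s\in\mathrm{start}(A)$ then $f[s]\cap\mathrm{start}(B)\neq\emptyset$; (2) if $s\xrightarrow{a}_A t$ and $u\in f[s]$ then (a) $u\in f[t]$ and $a=\tau$, or (b) there is $v\in f[t]$ with $u\xrightarrow{a}_B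 v$, or (c) there is $v\in f[s]$ with $u\xrightarrow{\tau}_B v$ and $n(s\xrightarrow{a}t,v)<n(s\xrightarrow{a}t,u)$. Write $A\le_F B$ if one exists. A normed history relation from $A$ to $B$ is a pair $(r,n)$ such that $r$ is a step refinement from $B$ to $A$ and $(r^{-1},n)$ is a normed forward simulation from $A$ to $B$. Write $A\le_H B$ if one exists. *)

theory Defs
  imports Main
begin

record ('s, 'a) automaton =
  states :: "'s set"
  start :: "'s set"
  acts :: "'a set"
  steps :: "('s \<times> 'a \<times> 's) set"

text \<open>The distinguished internal action is a fixed element tau of the action type,
  shared by all automata under consideration.\<close>

definition is_automaton :: "'a \<Rightarrow> ('s, 'a) automaton \<Rightarrow> bool" where
  "is_automaton tau A \<longleftrightarrow>
     start A \<subseteq> states A \<and> start A \<noteq> {} \<and> tau \<in> acts A \<and>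
     steps A \<subseteq> states A \<times> acts A \<times> states A"

definition step_refinement ::
  "'a \<Rightarrow> ('s, 'a) automaton \<Rightarrow> ('t, 'a) automaton \<Rightarrow> ('s \<Rightarrow> 't option) \<Rightarrow> bool" where
  "step_refinement tau A B r \<longleftrightarrow>
     dom r \<subseteq> states A \<and> ran r \<subseteq> states B \<and>
     (\<forall>s \<in> start A. s \<in> dom r \<and> the (r s) \<in> start B) \<and>
     (\<forall>s a t. (s, a, t) \<in> steps A \<and> s \<in> dom r \<longrightarrow>
        t \<in> dom r \<and>
        ((the (r s) = the (r t) \<and> a = tau) \<or> (the (r s), a, the (r t)) \<in> steps B))"

definition refines_R :: "'a \<Rightarrow> ('s, 'a) automaton \<Rightarrow> ('t, 'a) automaton \<Rightarrow> bool" where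
  "refines_R tau A B \<longleftrightarrow> (\<exists>r. step_refinement tau A B r)"

definition normed_forward_sim ::
  "'a \<Rightarrow> ('s, 'a) automaton \<Rightarrow> ('t, 'a) automaton \<Rightarrow> ('s \<times> 't) set
    \<Rightarrow> ('s \<times> 'a \<times> 's \<Rightarrow> 't \<Rightarrow> 'n) \<Rightarrow> 'n set \<Rightarrow> ('n \<times> 'n) set \<Rightarrow> bool" where
  "normed_forward_sim tau A B f n S R \<longleftrightarrow>
     f \<subseteq> states A \<times> states B \<and>
     R \<subseteq> S \<times> S \<and> wf R \<and> trans R \<and>
     (\<forall>st \<in> steps A. \<forall>u \<in> states B. n st u \<in> S) \<and>
     (\<forall>s \<in> start A. f `` {s} \<inter> start B \<noteq> {}) \<and>
     (\<forall>s a t u. (s, a, t) \<in> steps A \<and> u \<in> f `` {s} \<longrightarrow>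
        (u \<in> f `` {t} \<and> a = tau) \<or>
        (\<exists>v \<in> f `` {t}. (u, a, v) \<in> steps B) \<or>
        (\<exists>v \<in> f `` {s}. (u, tau, v) \<in> steps B \<and> (n (s, a, t) v, n (s, a, t) u) \<in> R))"

text \<open>The norm set S is taken inside the type steps(A) x states(B); this loses
  no generality since any norm can be pulled back along n (inverse image of a
  well-founded strict order is a well-founded strict order).\<close>
definition refines_F :: "'a \<Rightarrow> ('s, 'a) automaton \<Rightarrow> ('t, 'a) automaton \<Rightarrow> bool" where
  "refines_F tau A B \<longleftrightarrow>
     (\<exists>f (n :: 's \<times> 'a \<times> 's \<Rightarrow> 't \<Rightarrow> ('s \<times> 'a \<times> 's) \<times> 't) S R.
        normed_forward_sim tau A B f n S R)"

definition normed_history_rel ::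
  "'a \<Rightarrow> ('s, 'a) automaton \<Rightarrow> ('t, 'a) automaton \<Rightarrow> ('t \<Rightarrow> 's option)
    \<Rightarrow> ('s \<times> 'a \<times> 's \<Rightarrow> 't \<Rightarrow> 'n) \<Rightarrow> 'n set \<Rightarrow> ('n \<times> 'n) set \<Rightarrow> bool" where
  "normed_history_rel tau A B r n S R \<longleftrightarrow>
     step_refinement tau B A r \<and>
     normed_forward_sim tau A B {(s, u). r u = Some s} n S R"

definition refines_H :: "'a \<Rightarrow> ('s, 'a) automaton \<Rightarrow> ('t, 'a) automaton \<Rightarrow> bool" where
  "refines_H tau A B \<longleftrightarrow>
     (\<exists>r (n :: 's \<times> 'a \<times> 's \<Rightarrow> 't \<Rightarrow> ('s \<times> 'a \<times> 's) \<times> 't) S R.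
        normed_history_rel tau A B r n S R)"

end

theory Submission
  imports Defs
begin

text \<open>A normed forward simulation f from A to B yields the intermediate automaton whose
  states are the pairs in f and whose steps are the joint steps of A and B together with
  the internal steps of either component alone. Both projections are step refinements,
  and the given norm, read off the second component, makes the inverse of the first
  projection a normed forward simulation.

  Conversely, a normed forward simulation composed with a step refinement is again one,
  but the norm cannot be transported: the refinement may collapse internal steps. The
  well-founded norm is therefore replaced by the least number of internal steps of the
  target needed before a step of the source is matched; this count does not increase
  under a step refinement.\<close>

definition matches_step ::
  "'a \<Rightarrow> ('s \<times> 't) set \<Rightarrow> ('t, 'a) automaton \<Rightarrow> 'a \<Rightarrow> 's \<Rightarrow> 't \<Rightarrow> bool" where
  "matches_step tau f B a t u \<longleftrightarrow>
     (u \<in> f `` {t} \<and> a = tau) \<or> (\<exists>v \<in> f `` {t}. (u, a, v) \<in> steps B)"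

fun matches_after ::
  "'a \<Rightarrow> ('s \<times> 't) set \<Rightarrow> ('t, 'a) automaton \<Rightarrow> 's \<Rightarrow> 'a \<Rightarrow> 's \<Rightarrow> nat \<Rightarrow> 't \<Rightarrow> bool" where
  "matches_after tau f B s a t 0 u \<longleftrightarrow> u \<in> f `` {s} \<and> matches_step tau f B a t u"
| "matches_after tau f B s a t (Suc k) u \<longleftrightarrow> u \<in> f `` {s} \<and>
     (matches_step tau f B a t u \<or>
      (\<exists>v. (u, tau, v) \<in> steps B \<and> matches_after tau f B s a t k v))"

definition finite_delay_sim ::
  "'a \<Rightarrow> ('s, 'a) automaton \<Rightarrow> ('t, 'a) automaton \<Rightarrow> ('s \<times> 't) set \<Rightarrow> bool" where
  "finite_delay_sim tau A B f \<longleftrightarrow>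
     f \<subseteq> states A \<times> states B \<and>
     (\<forall>s \<in> start A. f `` {s} \<inter> start B \<noteq> {}) \<and>
     (\<forall>s a t u. (s, a, t) \<in> steps A \<and> u \<in> f `` {s} \<longrightarrow>
        (\<exists>k. matches_after tau f B s a t k u))"

lemma matches_after_in_Image: "matches_after tau f B s a t k u \<Longrightarrow> u \<in> f `` {s}"
  by (cases k) auto

lemma matches_after_Suc:
  "matches_after tau f B s a t k u \<Longrightarrow> matches_after tau f B s a t (Suc k) u"
  by (induction k arbitrary: u) auto

lemma normed_forward_sim_matches_after:
  assumes sim: "normed_forward_sim tau A B f n S R" and st: "(s, a, t) \<in> steps A"
    and u: "u \<in> f `` {s}"
  shows "\<exists>k. matches_after tau f B s a t k u"
proof -
  from sim have "wf (inv_image R (n (s, a, t)))"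
    unfolding normed_forward_sim_def by simp
  then show ?thesis using u
  proof (induction u rule: wf_induct_rule)
    case (less u)
    from sim st \<open>u \<in> f `` {s}\<close> consider
        "matches_step tau f B a t u"
      | v where "v \<in> f `` {s}" "(u, tau, v) \<in> steps B" "(n (s, a, t) v, n (s, a, t) u) \<in> R"
      unfolding normed_forward_sim_def matches_step_def by blast
    then show ?case
    proof cases
      case 1
      with less.prems have "matches_after tau f B s a t 0 u" by simp
      then show ?thesis ..
    next
      case (2 v)
      with less.IH obtain k where "matches_after tau f B s a t k v" by auto
      with 2 less.prems have "matches_after tau f B s a t (Suc k) u" by auto
      then show ?thesis ..
    qed
  qed
qed

lemma normed_forward_sim_imp_finite_delay_sim:
  assumes sim: "normed_forward_sim tau A B f n S R"
  shows "finite_delay_sim tau A B f"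
  using sim normed_forward_sim_matches_after[OF sim]
  unfolding finite_delay_sim_def normed_forward_sim_def by blast

lemma finite_delay_sim_imp_normed_forward_sim:
  assumes fd: "finite_delay_sim tau A B f"
  shows "\<exists>R. normed_forward_sim tau A B f Pair UNIV R"
proof -
  define d where "d s a t u = (LEAST k. matches_after tau f B s a t k u)" for s a t u
  define R where "R = inv_image less_than (\<lambda>((s, a, t), u). d s a t u)"
  have "normed_forward_sim tau A B f Pair UNIV R"
    unfolding normed_forward_sim_def
  proof (intro conjI allI impI)
    show "wf R" unfolding R_def by simp
    show "trans R" unfolding R_def by (simp add: trans_inv_image)
  next
    fix s a t u
    assume "(s, a, t) \<in> steps A \<and> u \<in> f `` {s}"
    with fd obtain k where "matches_after tau f B s a t k u"
      unfolding finite_delay_sim_def by blast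
    then have least: "matches_after tau f B s a t (d s a t u) u"
      unfolding d_def by (rule LeastI)
    show "(u \<in> f `` {t} \<and> a = tau) \<or> (\<exists>v \<in> f `` {t}. (u, a, v) \<in> steps B) \<or>
        (\<exists>v \<in> f `` {s}. (u, tau, v) \<in> steps B \<and> (((s, a, t), v), ((s, a, t), u)) \<in> R)"
    proof (cases "matches_step tau f B a t u")
      case True
      then show ?thesis unfolding matches_step_def by blast
    next
      case False
      with least obtain m where m: "d s a t u = Suc m"
        by (cases "d s a t u") auto
      with least False obtain v where v: "(u, tau, v) \<in> steps B" "matches_after tau f B s a t m v"
        by auto
      have "d s a t v \<le> m" unfolding d_def using v(2) by (rule Least_le)
      with m have "(((s, a, t), v), ((s, a, t), u)) \<in> R" unfolding R_def by simp
      moreover have "v \<in> f `` {s}" using v(2) by (rule matches_after_in_Image)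
      ultimately show ?thesis using v(1) by blast
    qed
  qed (use fd in \<open>simp_all add: finite_delay_sim_def\<close>)
  then show ?thesis ..
qed

lemma step_refinement_stepE:
  assumes r: "step_refinement tau A B r" and st: "(s, a, t) \<in> steps A" and x: "r s = Some x"
  obtains y where "r t = Some y" and "(x = y \<and> a = tau) \<or> (x, a, y) \<in> steps B"
proof -
  from x have "s \<in> dom r" by blast
  with r st have "t \<in> dom r"
    and step: "(the (r s) = the (r t) \<and> a = tau) \<or> (the (r s), a, the (r t)) \<in> steps B"
    unfolding step_refinement_def by blast+
  then obtain y where y: "r t = Some y" by blast
  with step x show thesis by (intro that) simp_all
qed

lemma matches_step_step_refinement:
  assumes g: "step_refinement tau C B g"
    and m: "matches_step tau f C a t u" and v: "g u = Some v"
  shows "matches_step tau (f O Map.graph g) B a t v"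
proof -
  from m consider "u \<in> f `` {t}" "a = tau" | w where "w \<in> f `` {t}" "(u, a, w) \<in> steps C"
    unfolding matches_step_def by blast
  then show ?thesis
  proof cases
    case 1
    with v show ?thesis unfolding matches_step_def by (blast intro: in_graphI)
  next
    case (2 w)
    from g 2(2) v obtain x where x: "g w = Some x" "(v = x \<and> a = tau) \<or> (v, a, x) \<in> steps B"
      by (rule step_refinement_stepE)
    with 2(1) have "x \<in> (f O Map.graph g) `` {t}" by (blast intro: in_graphI)
    with x show ?thesis unfolding matches_step_def by blast
  qed
qed

lemma matches_after_step_refinement:
  assumes g: "step_refinement tau C B g"
  shows "matches_after tau f C s a t k u \<Longrightarrow> g u = Some v \<Longrightarrow>
    matches_after tau (f O Map.graph g) B s a t k v"
proof (induction k arbitrary: u v)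
  case 0
  then have "v \<in> (f O Map.graph g) `` {s}" by (auto intro: in_graphI)
  moreover from "0.prems" have "matches_step tau f C a t u" by simp
  then have "matches_step tau (f O Map.graph g) B a t v" using "0.prems"(2)
    by (rule matches_step_step_refinement[OF g])
  ultimately show ?case by simp
next
  case (Suc k)
  then have v_in: "v \<in> (f O Map.graph g) `` {s}" by (auto intro: in_graphI)
  from Suc.prems(1) consider
      "matches_step tau f C a t u"
    | w where "(u, tau, w) \<in> steps C" "matches_after tau f C s a t k w"
    by auto
  then show ?case
  proof cases
    case 1
    then have "matches_step tau (f O Map.graph g) B a t v" using Suc.prems(2)
      by (rule matches_step_step_refinement[OF g])
    with v_in show ?thesis by simp
  next
    case (2 w)
    from g 2(1) Suc.prems(2) obtain x where x: "g w = Some x" "v = x \<or> (v, tau, x) \<in> steps B"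
      by (rule step_refinement_stepE) blast+
    with 2 Suc.IH have x_matches: "matches_after tau (f O Map.graph g) B s a t k x" by blast
    from x(2) show ?thesis
    proof
      assume "v = x"
      then show ?thesis using matches_after_Suc[OF x_matches] by (simp only:)
    next
      assume "(v, tau, x) \<in> steps B"
      with x_matches v_in show ?thesis by auto
    qed
  qed
qed

lemma finite_delay_sim_relcomp_step_refinement:
  assumes fd: "finite_delay_sim tau A C f" and g: "step_refinement tau C B g"
  shows "finite_delay_sim tau A B (f O Map.graph g)"
  unfolding finite_delay_sim_def
proof (intro conjI ballI allI impI)
  show "f O Map.graph g \<subseteq> states A \<times> states B"
  proof
    fix p assume "p \<in> f O Map.graph g"
    then obtain s u v where p: "p = (s, v)" "(s, u) \<in> f" "g u = Some v"
      by (auto dest: in_graphD)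
    from fd p(2) have "s \<in> states A" unfolding finite_delay_sim_def by blast
    moreover from g p(3) have "v \<in> states B" unfolding step_refinement_def by (blast intro: ranI)
    ultimately show "p \<in> states A \<times> states B" using p(1) by simp
  qed
next
  fix s assume s: "s \<in> start A"
  with fd obtain u where u: "(s, u) \<in> f" "u \<in> start C"
    unfolding finite_delay_sim_def by blast
  with g obtain v where "g u = Some v" "v \<in> start B"
    unfolding step_refinement_def by fastforce
  with u(1) show "(f O Map.graph g) `` {s} \<inter> start B \<noteq> {}"
    by (blast intro: in_graphI)
next
  fix s a t v assume st: "(s, a, t) \<in> steps A \<and> v \<in> (f O Map.graph g) `` {s}"
  then obtain u where u: "(s, u) \<in> f" "g u = Some v" by (auto dest: in_graphD)
  with fd st obtain k where "matches_after tau f C s a t k u"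
    unfolding finite_delay_sim_def by blast
  then have "matches_after tau (f O Map.graph g) B s a t k v"
    using u(2) by (rule matches_after_step_refinement[OF g])
  then show "\<exists>k. matches_after tau (f O Map.graph g) B s a t k v" ..
qed

lemma finite_delay_sim_imp_refines_F:
  fixes f :: "('s \<times> 't) set"
  assumes "finite_delay_sim tau A B f"
  shows "refines_F tau A B"
proof -
  from finite_delay_sim_imp_normed_forward_sim[OF assms]
  obtain R where "normed_forward_sim tau A B f Pair UNIV R" ..
  then show ?thesis unfolding refines_F_def by blast
qed

lemma refines_H_refines_R_imp_refines_F:
  fixes A :: "('s, 'a) automaton" and C :: "('c, 'a) automaton"
  assumes "refines_H tau A C" and "refines_R tau C B"
  shows "refines_F tau A B"
proof -
  from assms(1) obtain r S R and n :: "'s \<times> 'a \<times> 's \<Rightarrow> 'c \<Rightarrow> ('s \<times> 'a \<times> 's) \<times> 'c"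
    where "normed_forward_sim tau A C {(s, u). r u = Some s} n S R"
    unfolding refines_H_def normed_history_rel_def by blast
  then have fd: "finite_delay_sim tau A C {(s, u). r u = Some s}"
    by (rule normed_forward_sim_imp_finite_delay_sim)
  from assms(2) obtain g where "step_refinement tau C B g"
    unfolding refines_R_def ..
  with fd have "finite_delay_sim tau A B ({(s, u). r u = Some s} O Map.graph g)"
    by (rule finite_delay_sim_relcomp_step_refinement)
  then show ?thesis by (rule finite_delay_sim_imp_refines_F)
qed

definition sim_product ::
  "'a \<Rightarrow> ('s, 'a) automaton \<Rightarrow> ('t, 'a) automaton \<Rightarrow> ('s \<times> 't) set \<Rightarrow> ('s \<times> 't, 'a) automaton"
where
  "sim_product tau A B f =
     \<lparr>states = f,
      start = f \<inter> start A \<times> start B,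
      acts = acts B,
      steps =
        {((s, u), a, (t, v)) | s u a t v.
           (s, a, t) \<in> steps A \<and> (u, a, v) \<in> steps B \<and> (s, u) \<in> f \<and> (t, v) \<in> f} \<union>
        {((s, u), tau, (t, u)) | s u t. (s, tau, t) \<in> steps A \<and> (s, u) \<in> f \<and> (t, u) \<in> f} \<union>
        {((s, u), tau, (s, v)) | s u v. (u, tau, v) \<in> steps B \<and> (s, u) \<in> f \<and> (s, v) \<in> f}\<rparr>"

lemma is_automaton_sim_product:
  assumes "is_automaton tau A" and "is_automaton tau B"
    and "\<forall>s \<in> start A. f `` {s} \<inter> start B \<noteq> {}"
  shows "is_automaton tau (sim_product tau A B f)"
  using assms unfolding is_automaton_def sim_product_def by auto

lemma step_refinement_sim_product_fst:
  assumes "f \<subseteq> states A \<times> states B"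
  shows "step_refinement tau (sim_product tau A B f) A ((Some \<circ> fst) |` f)"
  using assms unfolding step_refinement_def sim_product_def by (auto simp: ran_def restrict_map_def split: if_splits)

lemma step_refinement_sim_product_snd:
  assumes "f \<subseteq> states A \<times> states B"
  shows "step_refinement tau (sim_product tau A B f) B ((Some \<circ> snd) |` f)"
  using assms unfolding step_refinement_def sim_product_def by (auto simp: ran_def restrict_map_def split: if_splits)

lemma normed_forward_sim_sim_product:
  assumes sim: "normed_forward_sim tau A B f n S R"
  shows "normed_forward_sim tau A (sim_product tau A B f) {(s, p). ((Some \<circ> fst) |` f) p = Some s}
           Pair UNIV (inv_image R (\<lambda>(st, p). n st (snd p)))"
    (is "normed_forward_sim tau A ?C ?g Pair UNIV ?R")
proof -
  have g_iff: "((Some \<circ> fst) |` f) p = Some s \<longleftrightarrow> p \<in> f \<and> fst p = s" for s p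
    by (auto simp: restrict_map_def)
  from sim have fs: "f \<subseteq> states A \<times> states B"
    and start: "\<forall>s \<in> start A. f `` {s} \<inter> start B \<noteq> {}"
    and wf: "wf R" and trans: "trans R"
    unfolding normed_forward_sim_def by simp_all
  have match: "(p \<in> ?g `` {t} \<and> a = tau) \<or> (\<exists>q \<in> ?g `` {t}. (p, a, q) \<in> steps ?C) \<or>
      (\<exists>q \<in> ?g `` {s}. (p, tau, q) \<in> steps ?C \<and> (((s, a, t), q), ((s, a, t), p)) \<in> ?R)"
    if st: "(s, a, t) \<in> steps A" and p: "p \<in> ?g `` {s}" for s a t p
  proof -
    from p obtain u where p_eq: "p = (s, u)" and su: "(s, u) \<in> f" by (cases p) (auto simp: g_iff)
    from sim st su consider
        "(t, u) \<in> f" "a = tau"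
      | v where "(t, v) \<in> f" "(u, a, v) \<in> steps B"
      | v where "(s, v) \<in> f" "(u, tau, v) \<in> steps B" "(n (s, a, t) v, n (s, a, t) u) \<in> R"
      unfolding normed_forward_sim_def by blast
    then show ?thesis
    proof cases
      case 1
      then have "(p, a, (t, u)) \<in> steps ?C" using st su p_eq by (simp add: sim_product_def)
      with 1 show ?thesis by (auto simp: g_iff)
    next
      case (2 v)
      then have "(p, a, (t, v)) \<in> steps ?C" using st su p_eq by (simp add: sim_product_def)
      with 2 show ?thesis by (auto simp: g_iff)
    next
      case (3 v)
      then have "(p, tau, (s, v)) \<in> steps ?C" using su p_eq by (simp add: sim_product_def)
      with 3 p_eq show ?thesis by (auto simp: g_iff)
    qed
  qed
  have "?g \<subseteq> states A \<times> states ?C"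
    using fs by (auto simp: g_iff sim_product_def)
  moreover have "?g `` {s} \<inter> start ?C \<noteq> {}" if s: "s \<in> start A" for s
  proof -
    from start s obtain u where "(s, u) \<in> f" and "u \<in> start B" by blast
    with s have "(s, u) \<in> ?g `` {s} \<inter> start ?C" by (simp add: g_iff sim_product_def)
    then show ?thesis by blast
  qed
  ultimately show ?thesis
    using match wf trans unfolding normed_forward_sim_def by (simp add: trans_inv_image)
qed

lemma refines_F_imp_refines_H_refines_R:
  fixes A :: "('s, 'a) automaton" and B :: "('t, 'a) automaton"
  assumes "is_automaton tau A" and "is_automaton tau B" and "refines_F tau A B"
  shows "\<exists>C :: ('s \<times> 't, 'a) automaton.
           is_automaton tau C \<and> refines_H tau A C \<and> refines_R tau C B"
proof -
  from assms(3) obtain f S R and n :: "'s \<times> 'a \<times> 's \<Rightarrow> 't \<Rightarrow> ('s \<times> 'a \<times> 's) \<times> 't"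
    where sim: "normed_forward_sim tau A B f n S R"
    unfolding refines_F_def by blast
  then have fs: "f \<subseteq> states A \<times> states B"
    and start: "\<forall>s \<in> start A. f `` {s} \<inter> start B \<noteq> {}"
    unfolding normed_forward_sim_def by simp_all
  let ?C = "sim_product tau A B f"
  have "is_automaton tau ?C"
    using assms(1,2) start by (rule is_automaton_sim_product)
  moreover have "refines_H tau A ?C"
    unfolding refines_H_def normed_history_rel_def
    using step_refinement_sim_product_fst[OF fs] normed_forward_sim_sim_product[OF sim] by blast
  moreover have "refines_R tau ?C B"
    unfolding refines_R_def using step_refinement_sim_product_snd[OF fs] by blast
  ultimately show ?thesis by blast
qed

theorem mainTheorem16:
  fixes tau :: 'a
    and A :: "('s, 'a) automaton"
    and B :: "('t, 'a) automaton"
  assumes "is_automaton tau A" and "is_automaton tau B"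
  shows "(refines_F tau A B \<longleftrightarrow>
           (\<exists>C :: ('s \<times> 't, 'a) automaton. is_automaton tau C \<and>
              refines_H tau A C \<and> refines_R tau C B))
       \<and> (\<forall>C :: ('c, 'a) automaton. is_automaton tau C \<and>
              refines_H tau A C \<and> refines_R tau C B \<longrightarrow> refines_F tau A B)"
proof (intro conjI iffI allI impI)
  assume "refines_F tau A B"
  with assms show "\<exists>C :: ('s \<times> 't, 'a) automaton.
      is_automaton tau C \<and> refines_H tau A C \<and> refines_R tau C B"
    by (rule refines_F_imp_refines_H_refines_R)
next
  assume "\<exists>C :: ('s \<times> 't, 'a) automaton.
      is_automaton tau C \<and> refines_H tau A C \<and> refines_R tau C B"
  then obtain C :: "('s \<times> 't, 'a) automaton" where "refines_H tau A C" and "refines_R tau C B"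
    by blast
  then show "refines_F tau A B" by (rule refines_H_refines_R_imp_refines_F)
next
  fix C :: "('c, 'a) automaton"
  assume "is_automaton tau C \<and> refines_H tau A C \<and> refines_R tau C B"
  then show "refines_F tau A B" using refines_H_refines_R_imp_refines_F[of tau A C B] by blast
qed

end
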